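(* Let $G=(V,E)$ be a graph and $D\subseteq E$. Each of the following families of cycles is uncrossable: (for $G$ directed) the family $\mathcal{C}^{\rightarrow}_{\mathrm{all}}$ of all directed cycles and the family $\mathcal{C}^{\rightarrow}_{\mathrm{girth}}$ of all shortest directed cycles; (for $G$ undirected) the family $\mathcal{C}_{\mathrm{all}}$ of all cycles, the family $\mathcal{C}_{\mathrm{girth}}$ of all shortest cycles, the family $\mathcal{C}_{\mathrm{odd}}$ of all cycles with an odd number of edges, the family $\mathcal{C}_D^{=1}$ of all cycles containing exactly one edge of $D$, and the family $\mathcal{C}_D^{\ge 1}$ of all cycles containing at least one edge of $D$.
   Context: All cycles are simple; shortest means minimum number of edges. For paths/cycles, $P+Q$ is the union (multiset sum) of edge sets and $C-P$ the edge set of $C$ minus that of $P$. A family $\mathcal{C}$ of cycles is uncrossable if for all $C_1,C_2\in\mathcal{C}$ and every path $P_2$ in $C_2$ sharing only its two endpoints with $C_1$, there is a path $P_1$ in $C_1$ between these endpoints with $P_1+P_2\in\mathcal{C}$ and such that $(C_1-P_1)+(C_2-P_2)$ contains (the edge set of) a cycle of $\mathcal{C}$. *)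

theory Defs
  imports Main
begin

text \<open>Graphs are (multi)graphs given by a vertex set V, an edge set E and
  functions tail, head assigning endpoints to edges.  For a directed graph,
  edge e goes from tail e to head e; for an undirected graph the pair
  {tail e, head e} is the (unordered) set of endpoints of e.
  Paths and cycles are identified with their edge sets.\<close>

definition conn_dir :: "('e \<Rightarrow> 'v) \<Rightarrow> ('e \<Rightarrow> 'v) \<Rightarrow> 'e \<Rightarrow> 'v \<Rightarrow> 'v \<Rightarrow> bool" where
  "conn_dir tail head e u v \<longleftrightarrow> tail e = u \<and> head e = v"

definition conn_und :: "('e \<Rightarrow> 'v) \<Rightarrow> ('e \<Rightarrow> 'v) \<Rightarrow> 'e \<Rightarrow> 'v \<Rightarrow> 'v \<Rightarrow> bool" where
  "conn_und tail head e u v \<longleftrightarrow> (tail e = u \<and> head e = v) \<or> (tail e = v \<and> head e = u)"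

definition is_cycle :: "('e \<Rightarrow> 'v \<Rightarrow> 'v \<Rightarrow> bool) \<Rightarrow> 'e set \<Rightarrow> 'e set \<Rightarrow> bool" where
  "is_cycle conn E C \<longleftrightarrow>
     (\<exists>vs es. length vs = length es \<and> es \<noteq> [] \<and> distinct vs \<and> distinct es \<and>
        set es \<subseteq> E \<and>
        (\<forall>i<length es. conn (es ! i) (vs ! i) (vs ! ((Suc i) mod length es))) \<and>
        C = set es)"

definition is_path :: "('e \<Rightarrow> 'v \<Rightarrow> 'v \<Rightarrow> bool) \<Rightarrow> 'e set \<Rightarrow> 'e set \<Rightarrow> 'v \<Rightarrow> 'v \<Rightarrow> bool" where
  "is_path conn E P x y \<longleftrightarrow>
     (\<exists>vs es. length vs = Suc (length es) \<and> es \<noteq> [] \<and> distinct vs \<and> distinct es \<and>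
        set es \<subseteq> E \<and>
        (\<forall>i<length es. conn (es ! i) (vs ! i) (vs ! Suc i)) \<and>
        hd vs = x \<and> last vs = y \<and> P = set es)"

definition verts :: "('e \<Rightarrow> 'v) \<Rightarrow> ('e \<Rightarrow> 'v) \<Rightarrow> 'e set \<Rightarrow> 'v set" where
  "verts tail head F = tail ` F \<union> head ` F"

text \<open>Uncrossable family.  P1 + P2 (multiset sum) is the edge set of a cycle
  iff P1, P2 are disjoint and their union is that edge set.\<close>
definition uncrossable ::
  "('e \<Rightarrow> 'v \<Rightarrow> 'v \<Rightarrow> bool) \<Rightarrow> ('e \<Rightarrow> 'v) \<Rightarrow> ('e \<Rightarrow> 'v) \<Rightarrow> 'e set \<Rightarrow> 'e set set \<Rightarrow> bool" where
  "uncrossable conn tail head E \<C> \<longleftrightarrow>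
     (\<forall>C1\<in>\<C>. \<forall>C2\<in>\<C>. \<forall>P2 x y.
        is_path conn E P2 x y \<and> P2 \<subseteq> C2 \<and> verts tail head P2 \<inter> verts tail head C1 = {x, y} \<longrightarrow>
        (\<exists>P1. (is_path conn E P1 x y \<or> is_path conn E P1 y x) \<and> P1 \<subseteq> C1 \<and>
              P1 \<inter> P2 = {} \<and> P1 \<union> P2 \<in> \<C> \<and>
              (\<exists>C\<in>\<C>. C \<subseteq> (C1 - P1) \<union> (C2 - P2))))"

definition cycles_all :: "('e \<Rightarrow> 'v \<Rightarrow> 'v \<Rightarrow> bool) \<Rightarrow> 'e set \<Rightarrow> 'e set set" where
  "cycles_all conn E = {C. is_cycle conn E C}"

definition cycles_girth :: "('e \<Rightarrow> 'v \<Rightarrow> 'v \<Rightarrow> bool) \<Rightarrow> 'e set \<Rightarrow> 'e set set" where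
  "cycles_girth conn E = {C. is_cycle conn E C \<and> (\<forall>C'. is_cycle conn E C' \<longrightarrow> card C \<le> card C')}"

definition cycles_odd :: "('e \<Rightarrow> 'v \<Rightarrow> 'v \<Rightarrow> bool) \<Rightarrow> 'e set \<Rightarrow> 'e set set" where
  "cycles_odd conn E = {C. is_cycle conn E C \<and> odd (card C)}"

definition cycles_D_eq1 :: "('e \<Rightarrow> 'v \<Rightarrow> 'v \<Rightarrow> bool) \<Rightarrow> 'e set \<Rightarrow> 'e set \<Rightarrow> 'e set set" where
  "cycles_D_eq1 conn E D = {C. is_cycle conn E C \<and> card (C \<inter> D) = 1}"

definition cycles_D_ge1 :: "('e \<Rightarrow> 'v \<Rightarrow> 'v \<Rightarrow> bool) \<Rightarrow> 'e set \<Rightarrow> 'e set \<Rightarrow> 'e set set" where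
  "cycles_D_ge1 conn E D = {C. is_cycle conn E C \<and> C \<inter> D \<noteq> {}}"

end

theory Submission
  imports Defs
begin

text \<open>Split C1 at the ends x, y of P2 into a path A from x to y and a path B from y to x, and let
  R = C2 - P2, a path from y back to x. Then B + P2 is a cycle (so is A + P2 if the graph is
  undirected), and A + R is a closed walk. A closed walk contains a cycle through each edge it
  traverses only once, and a closed walk of odd length contains an odd cycle. For each family one
  chooses P1 among A and B such that P1 + P2 belongs to the family and a suitable cycle can be
  extracted from the closed walk formed by the other side and R; in undirected graphs the situation
  is symmetric in A and B. For shortest cycles the two new cycles together have at most
  |C1| + |C2| edges, so both are shortest. If P2 shares an edge with C1, it is a single edge
  joining x and y and the claim is immediate.\<close>

section \<open>Walks, paths and cycles as index sequences\<close>

type_synonym ('e, 'v) adjacency = "'e \<Rightarrow> 'v \<Rightarrow> 'v \<Rightarrow> bool"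

definition walk :: "('e, 'v) adjacency \<Rightarrow> 'e set \<Rightarrow> nat \<Rightarrow> (nat \<Rightarrow> 'v) \<Rightarrow> (nat \<Rightarrow> 'e) \<Rightarrow> bool" where
  "walk conn E m u e \<longleftrightarrow> (\<forall>i<m. conn (e i) (u i) (u (Suc i)) \<and> e i \<in> E)"

definition path_seq :: "('e, 'v) adjacency \<Rightarrow> 'e set \<Rightarrow> nat \<Rightarrow> (nat \<Rightarrow> 'v) \<Rightarrow> (nat \<Rightarrow> 'e) \<Rightarrow> bool" where
  "path_seq conn E m u e \<longleftrightarrow> 0 < m \<and> walk conn E m u e \<and> inj_on u {..m} \<and> inj_on e {..<m}"

definition cycle_seq :: "('e, 'v) adjacency \<Rightarrow> 'e set \<Rightarrow> nat \<Rightarrow> (nat \<Rightarrow> 'v) \<Rightarrow> (nat \<Rightarrow> 'e) \<Rightarrow> bool" where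
  "cycle_seq conn E k v e \<longleftrightarrow>
     0 < k \<and> walk conn E k v e \<and> v k = v 0 \<and> inj_on v {..<k} \<and> inj_on e {..<k}"

lemma walk_take: "walk conn E m u e \<Longrightarrow> j \<le> m \<Longrightarrow> walk conn E j u e"
  unfolding walk_def by auto

lemma walk_drop: "walk conn E m u e \<Longrightarrow> walk conn E (m - i) (\<lambda>t. u (i + t)) (\<lambda>t. e (i + t))"
  unfolding walk_def by auto

lemma set_conv_nth_image: "set xs = (!) xs ` {..<length xs}"
  by (auto simp: set_conv_nth)

lemma is_path_iff_path_seq:
  "is_path conn E P x y \<longleftrightarrow> (\<exists>m u e. path_seq conn E m u e \<and> u 0 = x \<and> u m = y \<and> P = e ` {..<m})"
proof
  assume "is_path conn E P x y"
  then obtain vs es where h: "length vs = Suc (length es)" "es \<noteq> []" "distinct vs" "distinct es"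
        "set es \<subseteq> E" "\<forall>i<length es. conn (es ! i) (vs ! i) (vs ! Suc i)"
        "hd vs = x" "last vs = y" "P = set es"
    unfolding is_path_def by blast
  have "path_seq conn E (length es) ((!) vs) ((!) es)"
    unfolding path_seq_def walk_def using h by (auto intro!: inj_on_nth simp: nth_mem subsetD)
  moreover have "vs \<noteq> []" using h(1) by auto
  then have "vs ! 0 = x" "vs ! length es = y"
    using h by (auto simp: hd_conv_nth last_conv_nth)
  ultimately show "\<exists>m u e. path_seq conn E m u e \<and> u 0 = x \<and> u m = y \<and> P = e ` {..<m}"
    using h(9) by (metis set_conv_nth_image)
next
  assume "\<exists>m u e. path_seq conn E m u e \<and> u 0 = x \<and> u m = y \<and> P = e ` {..<m}"
  then obtain m u e where h: "path_seq conn E m u e" "u 0 = x" "u m = y" "P = e ` {..<m}" by blast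
  let ?vs = "map u [0..<Suc m]" and ?es = "map e [0..<m]"
  have "inj_on u {..m}" "inj_on e {..<m}" "0 < m" using h unfolding path_seq_def by auto
  then have "distinct ?vs" "distinct ?es"
    by (auto simp del: upt_Suc simp: distinct_map atLeast0LessThan lessThan_Suc_atMost)
  moreover have "set ?es \<subseteq> E" "\<forall>i<length ?es. conn (?es ! i) (?vs ! i) (?vs ! Suc i)"
    using h unfolding path_seq_def walk_def by (auto simp del: upt_Suc simp: nth_append)
  moreover have "hd ?vs = x" "last ?vs = y" "P = set ?es" "?es \<noteq> []"
    using h \<open>0 < m\<close> by (auto simp del: upt_Suc simp: hd_map last_map atLeast0LessThan)
  ultimately show "is_path conn E P x y" unfolding is_path_def
    by (intro exI[of _ ?vs] exI[of _ ?es]) (simp del: upt_Suc)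
qed

lemma is_cycle_iff_cycle_seq:
  "is_cycle conn E C \<longleftrightarrow> (\<exists>k v e. cycle_seq conn E k v e \<and> C = e ` {..<k})"
proof
  assume "is_cycle conn E C"
  then obtain vs es where h: "length vs = length es" "es \<noteq> []" "distinct vs" "distinct es"
        "set es \<subseteq> E" "\<forall>i<length es. conn (es ! i) (vs ! i) (vs ! (Suc i mod length es))"
        "C = set es"
    unfolding is_cycle_def by blast
  let ?k = "length es"
  have "inj_on (\<lambda>i. vs ! (i mod ?k)) {..<?k}"
    using h inj_on_nth[of vs "{..<?k}"] by (subst inj_on_cong[where g = "(!) vs"]) auto
  then have "cycle_seq conn E ?k (\<lambda>i. vs ! (i mod ?k)) ((!) es)"
    unfolding cycle_seq_def walk_def using h
    by (auto intro!: inj_on_nth simp: subsetD)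
  then show "\<exists>k v e. cycle_seq conn E k v e \<and> C = e ` {..<k}"
    using h(7) by (metis set_conv_nth_image)
next
  assume "\<exists>k v e. cycle_seq conn E k v e \<and> C = e ` {..<k}"
  then obtain k v e where h: "cycle_seq conn E k v e" "C = e ` {..<k}" by blast
  let ?vs = "map v [0..<k]" and ?es = "map e [0..<k]"
  have "inj_on v {..<k}" "inj_on e {..<k}" "0 < k" using h unfolding cycle_seq_def by auto
  then have "distinct ?vs" "distinct ?es"
    by (auto simp: distinct_map atLeast0LessThan)
  moreover have "v (Suc i mod k) = v (Suc i)" if "i < k" for i
    using h that unfolding cycle_seq_def by (cases "Suc i = k") auto
  then have "\<forall>i<length ?es. conn (?es ! i) (?vs ! i) (?vs ! (Suc i mod length ?es))" "set ?es \<subseteq> E"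
    using h unfolding cycle_seq_def walk_def by auto
  moreover have "C = set ?es" "?es \<noteq> []"
    using h \<open>0 < k\<close> by (auto simp: atLeast0LessThan)
  ultimately show "is_cycle conn E C" unfolding is_cycle_def
    by (intro exI[of _ ?vs] exI[of _ ?es]) simp
qed

lemma closed_index_mod: "v k = v 0 \<Longrightarrow> i \<le> k \<Longrightarrow> v (i mod k) = v (i::nat)"
  by (cases "i = k") auto

lemma inj_on_rotate_index:
  assumes "s < (k::nat)" shows "inj_on (\<lambda>i. (i + s) mod k) {..<k}"
proof (rule inj_onI)
  have mod_eq: "(i + s) mod k = (if i + s < k then i + s else i + s - k)" if "i < k" for i
    using that assms by (auto simp: le_mod_geq)
  fix a b assume "a \<in> {..<k}" "b \<in> {..<k}" "(a + s) mod k = (b + s) mod k"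
  then show "a = b" using mod_eq[of a] mod_eq[of b] by (auto split: if_splits)
qed

lemma rotate_index_image: "s < (k::nat) \<Longrightarrow> (\<lambda>i. (i + s) mod k) ` {..<k} = {..<k}"
  by (rule endo_inj_surj) (auto simp: inj_on_rotate_index)

lemma cycle_seq_rotate:
  assumes c: "cycle_seq conn E k v e" and s: "s < k"
  shows "cycle_seq conn E k (\<lambda>i. v ((i + s) mod k)) (\<lambda>i. e ((i + s) mod k))"
    and "(\<lambda>i. e ((i + s) mod k)) ` {..<k} = e ` {..<k}"
proof -
  have k: "0 < k" and closed: "v k = v 0" using c unfolding cycle_seq_def by auto
  have img: "(\<lambda>i. (i + s) mod k) ` {..<k} = {..<k}" using rotate_index_image s .
  have "conn (e ((i + s) mod k)) (v ((i + s) mod k)) (v ((Suc i + s) mod k)) \<and> e ((i + s) mod k) \<in> E"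
    if "i < k" for i
  proof -
    define j where "j = (i + s) mod k"
    have "j < k" using k unfolding j_def by simp
    then have "conn (e j) (v j) (v (Suc j)) \<and> e j \<in> E" using c unfolding cycle_seq_def walk_def by blast
    moreover have "v (Suc j) = v ((Suc i + s) mod k)"
      using closed_index_mod[of v k "Suc j", OF closed] \<open>j < k\<close> unfolding j_def by (simp add: mod_simps)
    ultimately show ?thesis unfolding j_def by simp
  qed
  moreover have "inj_on (v \<circ> (\<lambda>i. (i + s) mod k)) {..<k}" "inj_on (e \<circ> (\<lambda>i. (i + s) mod k)) {..<k}"
    using c inj_on_rotate_index[OF s] img unfolding cycle_seq_def by (auto intro: comp_inj_on)
  ultimately show "cycle_seq conn E k (\<lambda>i. v ((i + s) mod k)) (\<lambda>i. e ((i + s) mod k))"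
    using k unfolding cycle_seq_def walk_def by (simp add: comp_def)
  show "(\<lambda>i. e ((i + s) mod k)) ` {..<k} = e ` {..<k}"
    using img by (metis image_image)
qed

lemma cycle_seq_split:
  assumes c: "cycle_seq conn E k v e" and j: "0 < j" "j < k"
  shows "path_seq conn E j v e" "path_seq conn E (k - j) (\<lambda>t. v (j + t)) (\<lambda>t. e (j + t))"
    and "(\<lambda>t. e (j + t)) ` {..<k - j} = e ` {..<k} - e ` {..<j}"
proof -
  have w: "walk conn E k v e" and vi: "inj_on v {..<k}" and ei: "inj_on e {..<k}" and closed: "v k = v 0"
    using c unfolding cycle_seq_def by auto
  show "path_seq conn E j v e"
    unfolding path_seq_def using walk_take[OF w] j vi ei by (auto intro: inj_on_subset)
  have "inj_on (\<lambda>t. v (j + t)) {..k - j}"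
  proof (rule inj_onI)
    fix a b assume a: "a \<in> {..k - j}" and b: "b \<in> {..k - j}" and eq: "v (j + a) = v (j + b)"
    then have "v ((j + a) mod k) = v ((j + b) mod k)" using closed_index_mod[of v k, OF closed] j by simp
    then have "(j + a) mod k = (j + b) mod k" using vi j by (auto dest: inj_onD)
    then show "a = b" using a b j by (auto simp: mod_if split: if_splits)
  qed
  moreover have "inj_on (\<lambda>t. e (j + t)) {..<k - j}"
  proof (rule inj_onI)
    fix a b assume "a \<in> {..<k - j}" "b \<in> {..<k - j}" "e (j + a) = e (j + b)"
    then have "j + a = j + b" using ei by (auto dest: inj_onD)
    then show "a = b" by simp
  qed
  ultimately show "path_seq conn E (k - j) (\<lambda>t. v (j + t)) (\<lambda>t. e (j + t))"
    unfolding path_seq_def using walk_drop[OF w, of j] j by simp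
  have "{..<k} - {..<j} = (\<lambda>t. j + t) ` {..<k - j}"
  proof
    show "{..<k} - {..<j} \<subseteq> (\<lambda>t. j + t) ` {..<k - j}"
    proof
      fix i assume "i \<in> {..<k} - {..<j}"
      then show "i \<in> (\<lambda>t. j + t) ` {..<k - j}" by (intro image_eqI[of _ _ "i - j"]) auto
    qed
  qed auto
  then have "(\<lambda>t. e (j + t)) ` {..<k - j} = e ` ({..<k} - {..<j})"
    by (simp add: image_image)
  also have "\<dots> = e ` {..<k} - e ` {..<j}"
    using ei j by (intro inj_on_image_set_diff) auto
  finally show "(\<lambda>t. e (j + t)) ` {..<k - j} = e ` {..<k} - e ` {..<j}" .
qed

lemma walk_reverse:
  assumes sym: "\<And>g a b. conn g a b \<Longrightarrow> conn g b a" and w: "walk conn E m u e"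
  shows "walk conn E m (\<lambda>i. u (m - i)) (\<lambda>i. e (m - Suc i))"
  unfolding walk_def
proof (intro allI impI)
  fix i assume "i < m"
  then have "conn (e (m - Suc i)) (u (m - Suc i)) (u (Suc (m - Suc i))) \<and> e (m - Suc i) \<in> E"
    using w unfolding walk_def by auto
  moreover have "Suc (m - Suc i) = m - i" using \<open>i < m\<close> by simp
  ultimately show "conn (e (m - Suc i)) (u (m - i)) (u (m - Suc i)) \<and> e (m - Suc i) \<in> E"
    using sym by auto
qed

lemma reverse_index_image: "(\<lambda>i. m - Suc i) ` {..<m} = {..<m::nat}"
  by (rule endo_inj_surj) (auto simp: inj_on_def)

lemma path_seq_reverse:
  assumes sym: "\<And>g a b. conn g a b \<Longrightarrow> conn g b a" and p: "path_seq conn E m u e"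
  shows "path_seq conn E m (\<lambda>i. u (m - i)) (\<lambda>i. e (m - Suc i))"
    and "(\<lambda>i. e (m - Suc i)) ` {..<m} = e ` {..<m}"
proof -
  have ui: "inj_on u {..m}" and ei: "inj_on e {..<m}" using p unfolding path_seq_def by auto
  have "inj_on (\<lambda>i. u (m - i)) {..m}"
  proof (rule inj_onI)
    fix a b assume "a \<in> {..m}" "b \<in> {..m}" "u (m - a) = u (m - b)"
    then have "m - a = m - b" using ui by (auto dest: inj_onD)
    then show "a = b" using \<open>a \<in> {..m}\<close> \<open>b \<in> {..m}\<close> by auto
  qed
  moreover have "inj_on (\<lambda>i. e (m - Suc i)) {..<m}"
  proof (rule inj_onI)
    fix a b assume "a \<in> {..<m}" "b \<in> {..<m}" "e (m - Suc a) = e (m - Suc b)"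
    then have "m - Suc a = m - Suc b" using ei by (auto dest: inj_onD)
    then show "a = b" using \<open>a \<in> {..<m}\<close> \<open>b \<in> {..<m}\<close> by auto
  qed
  ultimately show "path_seq conn E m (\<lambda>i. u (m - i)) (\<lambda>i. e (m - Suc i))"
    using p walk_reverse[OF sym] unfolding path_seq_def by auto
  show "(\<lambda>i. e (m - Suc i)) ` {..<m} = e ` {..<m}"
    using reverse_index_image by (metis image_image)
qed

lemma is_path_reverse:
  assumes "\<And>g a b. conn g a b \<Longrightarrow> conn g b a" and "is_path conn E P x y"
  shows "is_path conn E P y x"
proof -
  obtain m u e where p: "path_seq conn E m u e" "u 0 = x" "u m = y" "P = e ` {..<m}"
    using assms(2) unfolding is_path_iff_path_seq by blast
  show ?thesis
    unfolding is_path_iff_path_seq using path_seq_reverse[OF assms(1) p(1)] p by fastforce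
qed

lemma cycle_seq_reverse:
  assumes sym: "\<And>g a b. conn g a b \<Longrightarrow> conn g b a" and c: "cycle_seq conn E k v e"
  shows "cycle_seq conn E k (\<lambda>i. v (k - i)) (\<lambda>i. e (k - Suc i))"
    and "(\<lambda>i. e (k - Suc i)) ` {..<k} = e ` {..<k}"
proof -
  have closed: "v k = v 0" and vi: "inj_on v {..<k}" and ei: "inj_on e {..<k}"
    using c unfolding cycle_seq_def by auto
  have "inj_on (\<lambda>i. v (k - i)) {..<k}"
  proof (rule inj_onI)
    fix a b assume a: "a \<in> {..<k}" and b: "b \<in> {..<k}" and "v (k - a) = v (k - b)"
    then have "v ((k - a) mod k) = v ((k - b) mod k)" using closed_index_mod[of v k, OF closed] by simp
    then have "(k - a) mod k = (k - b) mod k" using vi a by (auto dest: inj_onD)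
    then show "a = b" using a b by (auto simp: mod_if split: if_splits)
  qed
  moreover have "inj_on (\<lambda>i. e (k - Suc i)) {..<k}"
  proof (rule inj_onI)
    fix a b assume "a \<in> {..<k}" "b \<in> {..<k}" "e (k - Suc a) = e (k - Suc b)"
    then have "k - Suc a = k - Suc b" using ei by (auto dest: inj_onD)
    then show "a = b" using \<open>a \<in> {..<k}\<close> \<open>b \<in> {..<k}\<close> by auto
  qed
  ultimately show "cycle_seq conn E k (\<lambda>i. v (k - i)) (\<lambda>i. e (k - Suc i))"
    using c walk_reverse[OF sym] unfolding cycle_seq_def by auto
  show "(\<lambda>i. e (k - Suc i)) ` {..<k} = e ` {..<k}"
    using reverse_index_image by (metis image_image)
qed

definition splice :: "nat \<Rightarrow> (nat \<Rightarrow> 'a) \<Rightarrow> (nat \<Rightarrow> 'a) \<Rightarrow> nat \<Rightarrow> 'a" where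
  "splice m f g = (\<lambda>t. if t < m then f t else g (t - m))"

lemma splice_start: "splice m f g 0 = (if 0 < m then f 0 else g 0)"
  and splice_end: "splice m f g (m + n) = g n"
  unfolding splice_def by auto

lemma splice_image: "splice m f g ` {..<m + n} = f ` {..<m} \<union> g ` {..<n}"
proof
  show "f ` {..<m} \<union> g ` {..<n} \<subseteq> splice m f g ` {..<m + n}"
  proof
    fix z assume "z \<in> f ` {..<m} \<union> g ` {..<n}"
    then consider i where "i < m" "z = f i" | i where "i < n" "z = g i" by auto
    then show "z \<in> splice m f g ` {..<m + n}"
    proof cases
      case 1 then show ?thesis by (intro image_eqI[of _ _ i]) (auto simp: splice_def)
    next
      case 2 then show ?thesis by (intro image_eqI[of _ _ "m + i"]) (auto simp: splice_def)
    qed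
  qed
qed (auto simp: splice_def)

lemma walk_splice:
  assumes "walk conn E m u f" "walk conn E n w g" "u m = w 0"
  shows "walk conn E (m + n) (splice m u w) (splice m f g)"
  unfolding walk_def
proof (intro allI impI)
  fix i assume i: "i < m + n"
  show "conn (splice m f g i) (splice m u w i) (splice m u w (Suc i)) \<and> splice m f g i \<in> E"
  proof (cases "i < m")
    case True
    then have "splice m u w (Suc i) = u (Suc i)"
      using assms(3) by (cases "Suc i = m") (auto simp: splice_def)
    then show ?thesis using assms(1) True unfolding walk_def by (auto simp: splice_def)
  next
    case False
    then have "conn (g (i - m)) (w (i - m)) (w (Suc (i - m))) \<and> g (i - m) \<in> E"
      using assms(2) i unfolding walk_def by auto
    moreover have "Suc i - m = Suc (i - m)" using False by auto
    ultimately show ?thesis using False unfolding splice_def by auto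
  qed
qed

lemma inj_on_splice:
  assumes f: "inj_on f {..<m}" and g: "inj_on g {..<n}" and disj: "f ` {..<m} \<inter> g ` {..<n} = {}"
  shows "inj_on (splice m f g) {..<m + n}"
proof (rule inj_onI)
  fix a b assume a: "a \<in> {..<m + n}" and b: "b \<in> {..<m + n}" and eq: "splice m f g a = splice m f g b"
  have mixed: "False" if "a' < m" "m \<le> b'" "b' < m + n" "f a' = g (b' - m)" for a' b'
  proof -
    have "f a' \<in> f ` {..<m}" "g (b' - m) \<in> g ` {..<n}" using that(1-3) by auto
    then show False using disj that(4) by auto
  qed
  show "a = b"
  proof (cases "a < m"; cases "b < m")
    assume "a < m" "b < m" then show ?thesis using f eq by (auto simp: splice_def dest: inj_onD)
  next
    assume "a < m" "\<not> b < m" then show ?thesis using mixed[of a b] eq b by (auto simp: splice_def)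
  next
    assume "\<not> a < m" "b < m" then show ?thesis using mixed[of b a] eq a by (auto simp: splice_def)
  next
    assume "\<not> a < m" "\<not> b < m"
    then have "a - m = b - m" using g eq a b by (auto simp: splice_def dest: inj_onD)
    then show ?thesis using \<open>\<not> a < m\<close> \<open>\<not> b < m\<close> by simp
  qed
qed

lemma walk_shortcut:
  assumes w: "walk conn E m u e" and ij: "i < j" "j \<le> m" and eq: "u i = u j"
  shows "walk conn E (i + (m - j)) (splice i u (\<lambda>t. u (j + t))) (splice i e (\<lambda>t. e (j + t)))"
    and "splice i u (\<lambda>t. u (j + t)) 0 = u 0" "splice i u (\<lambda>t. u (j + t)) (i + (m - j)) = u m"
    and "splice i e (\<lambda>t. e (j + t)) ` {..<i + (m - j)} \<subseteq> e ` {..<m}"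
proof -
  show "walk conn E (i + (m - j)) (splice i u (\<lambda>t. u (j + t))) (splice i e (\<lambda>t. e (j + t)))"
    using walk_take[OF w, of i] walk_drop[OF w, of j] ij eq by (intro walk_splice) auto
  show "splice i u (\<lambda>t. u (j + t)) 0 = u 0" using eq by (cases "i = 0") (simp_all add: splice_start)
  have "splice i u (\<lambda>t. u (j + t)) (i + (m - j)) = u (j + (m - j))" by (rule splice_end)
  then show "splice i u (\<lambda>t. u (j + t)) (i + (m - j)) = u m" using ij by simp
  show "splice i e (\<lambda>t. e (j + t)) ` {..<i + (m - j)} \<subseteq> e ` {..<m}"
    unfolding splice_image using ij by auto
qed

lemma closed_walk_splice_paths:
  assumes p: "path_seq conn E m u f" "u 0 = a" "u m = b" and q: "path_seq conn E n w g" "w 0 = b" "w n = a"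
  shows "walk conn E (m + n) (splice m u w) (splice m f g)" "splice m u w (m + n) = splice m u w 0"
  using p q by (auto simp: path_seq_def splice_start splice_end intro: walk_splice)

section \<open>Paths and cycles in a graph\<close>

locale incidence =
  fixes conn :: "('e, 'v) adjacency" and tail head :: "'e \<Rightarrow> 'v"
  assumes conn_ends: "conn g a b \<Longrightarrow> (tail g = a \<and> head g = b) \<or> (tail g = b \<and> head g = a)"
begin

lemma conn_other_end: "conn g a b \<Longrightarrow> conn g a d \<Longrightarrow> a \<noteq> b \<Longrightarrow> b = d"
  using conn_ends[of g a b] conn_ends[of g a d] by auto

lemma conn_shared_end: "conn g a b \<Longrightarrow> conn g c d \<Longrightarrow> a = c \<or> a = d"
  using conn_ends[of g a b] conn_ends[of g c d] by auto

lemma conn_in_verts: "conn g a b \<Longrightarrow> g \<in> F \<Longrightarrow> a \<in> verts tail head F \<and> b \<in> verts tail head F"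
  using conn_ends[of g a b] unfolding verts_def by auto

lemma verts_walk:
  assumes w: "walk conn E m u e" and m: "0 < m"
  shows "verts tail head (e ` {..<m}) = u ` {..m}"
proof
  show "verts tail head (e ` {..<m}) \<subseteq> u ` {..m}"
  proof
    fix z assume "z \<in> verts tail head (e ` {..<m})"
    then obtain i where i: "i < m" "z = tail (e i) \<or> z = head (e i)" unfolding verts_def by auto
    have "conn (e i) (u i) (u (Suc i))" using w i unfolding walk_def by auto
    then have "z = u i \<or> z = u (Suc i)" using conn_ends[of "e i" "u i" "u (Suc i)"] i by auto
    then show "z \<in> u ` {..m}" using i by auto
  qed
  show "u ` {..m} \<subseteq> verts tail head (e ` {..<m})"
  proof
    fix z assume "z \<in> u ` {..m}"
    then obtain i where i: "i \<le> m" "z = u i" by auto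
    define j where "j = (if i < m then i else m - 1)"
    have j: "j < m" "i = j \<or> i = Suc j" using i m unfolding j_def by auto
    have "conn (e j) (u j) (u (Suc j))" using w j unfolding walk_def by auto
    moreover have "e j \<in> e ` {..<m}" using j by simp
    ultimately have "u j \<in> verts tail head (e ` {..<m}) \<and> u (Suc j) \<in> verts tail head (e ` {..<m})"
      by (rule conn_in_verts)
    then show "z \<in> verts tail head (e ` {..<m})" using j(2) i(2) by auto
  qed
qed

lemma verts_path_seq: "path_seq conn E m u e \<Longrightarrow> verts tail head (e ` {..<m}) = u ` {..m}"
  unfolding path_seq_def using verts_walk by blast

lemma verts_cycle_seq:
  assumes "cycle_seq conn E k v e" shows "verts tail head (e ` {..<k}) = v ` {..<k}"
proof -
  have "{..k} = insert k {..<k}" by auto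
  moreover have "v k \<in> v ` {..<k}" using assms unfolding cycle_seq_def by auto
  ultimately have "v ` {..k} = v ` {..<k}" by auto
  then show ?thesis using assms verts_walk[of E k v e] unfolding cycle_seq_def by simp
qed

lemma path_seq_follows_cycle_seq:
  assumes c: "cycle_seq conn E k v e" and p: "path_seq conn E' m u f" and sub: "f ` {..<m} \<subseteq> e ` {..<k}"
    and start: "u 0 = v 0" "f 0 = e 0"
  shows "t \<le> m \<Longrightarrow> t < k \<and> u t = v t \<and> (\<forall>s<t. f s = e s)"
proof (induction t)
  case 0 then show ?case using c start by (auto simp: cycle_seq_def)
next
  case (Suc t)
  then have tm: "t < m" and tk: "t < k" and ut: "u t = v t" and IH: "\<forall>s<t. f s = e s" by auto
  have ui: "inj_on u {..m}" and fi: "inj_on f {..<m}" using p unfolding path_seq_def by auto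
  have vi: "inj_on v {..<k}" and closed: "v k = v 0" using c unfolding cycle_seq_def by auto
  have c1: "conn (f t) (u t) (u (Suc t))" using p tm unfolding path_seq_def walk_def by auto
  have ft: "f t = e t"
  proof (cases "t = 0")
    case True then show ?thesis using start by simp
  next
    case t0: False
    obtain i where i: "i < k" "f t = e i" using sub tm by auto
    have "conn (e i) (v i) (v (Suc i))" using c i unfolding cycle_seq_def walk_def by auto
    then have "u t = v i \<or> u t = v (Suc i)" using conn_shared_end[OF c1] i by simp
    then show ?thesis
    proof
      assume "u t = v i"
      then have "t = i" using vi ut tk i by (auto dest: inj_onD)
      then show ?thesis using i by simp
    next
      assume ui_Suc: "u t = v (Suc i)"
      have "Suc i \<noteq> k"
      proof
        assume "Suc i = k"
        then have "u t = u 0" using ui_Suc closed start by simp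
        then show False using ui tm t0 by (auto dest: inj_onD)
      qed
      then have "t = Suc i" using ui_Suc vi ut tk i by (auto dest: inj_onD)
      then have "f t = f (t - 1)" using IH i by simp
      then show ?thesis using fi tm t0 by (auto dest: inj_onD)
    qed
  qed
  have "conn (e t) (v t) (v (Suc t))" using c tk unfolding cycle_seq_def walk_def by auto
  moreover have "u t \<noteq> u (Suc t)" using ui tm by (auto dest: inj_onD)
  ultimately have us: "u (Suc t) = v (Suc t)" using conn_other_end c1 ft ut by metis
  have "Suc t \<noteq> k"
  proof
    assume "Suc t = k"
    then have "u (Suc t) = u 0" using us closed start by simp
    then show False using ui Suc.prems by (auto dest: inj_onD)
  qed
  then show ?case using tk us IH ft by (auto simp: less_Suc_eq)
qed

lemma is_path_cycle_seq_complement: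
  assumes c: "cycle_seq conn E k v e" and p: "path_seq conn E m u f" and sub: "f ` {..<m} \<subseteq> e ` {..<k}"
    and start: "u 0 = v 0" "f 0 = e 0"
  shows "is_path conn E (e ` {..<k} - f ` {..<m}) (u m) (u 0)"
proof -
  have arc: "m < k" "u m = v m" "\<forall>s<m. f s = e s"
    using path_seq_follows_cycle_seq[OF c p sub start order.refl] by auto
  have "0 < m" using p unfolding path_seq_def by simp
  note split = cycle_seq_split[OF c this arc(1)]
  have "f ` {..<m} = e ` {..<m}" using arc(3) by simp
  moreover have "v (m + (k - m)) = u 0" using c start arc(1) unfolding cycle_seq_def by simp
  ultimately show ?thesis unfolding is_path_iff_path_seq
    using split(2,3) arc(2)
    by (intro exI[of _ "k - m"] exI[of _ "\<lambda>t. v (m + t)"] exI[of _ "\<lambda>t. e (m + t)"]) auto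
qed

lemma is_cycle_cycle_seq_from:
  assumes "is_cycle conn E C" "x \<in> verts tail head C"
  obtains k v e where "cycle_seq conn E k v e" "C = e ` {..<k}" "v 0 = x"
proof -
  obtain k v e where c: "cycle_seq conn E k v e" "C = e ` {..<k}"
    using assms(1) unfolding is_cycle_iff_cycle_seq by blast
  then obtain s where s: "s < k" "x = v s" using assms(2) verts_cycle_seq by auto
  show thesis
    using that[OF cycle_seq_rotate(1)[OF c(1) s(1)]] cycle_seq_rotate(2)[OF c(1) s(1)] c(2) s by simp
qed

lemma is_cycle_split:
  assumes C: "is_cycle conn E C" and xy: "x \<in> verts tail head C" "y \<in> verts tail head C" "x \<noteq> y"
  obtains A B where "is_path conn E A x y" "is_path conn E B y x" "A \<inter> B = {}" "A \<union> B = C"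
proof -
  obtain k v e where c: "cycle_seq conn E k v e" "C = e ` {..<k}" "v 0 = x"
    using is_cycle_cycle_seq_from[OF C xy(1)] .
  then obtain j where j: "j < k" "y = v j" using xy(2) verts_cycle_seq by auto
  with xy(3) c(3) have "0 < j" by (cases j) auto
  note split = cycle_seq_split[OF c(1) this j(1)]
  have "is_path conn E (e ` {..<j}) x y"
    unfolding is_path_iff_path_seq using split(1) c(3) j(2) by blast
  moreover have "v (j + (k - j)) = x" using c(1,3) j(1) unfolding cycle_seq_def by simp
  then have "is_path conn E (e ` {..<k} - e ` {..<j}) y x"
    unfolding is_path_iff_path_seq using split(2,3) j(2)
    by (intro exI[of _ "k - j"] exI[of _ "\<lambda>t. v (j + t)"] exI[of _ "\<lambda>t. e (j + t)"]) auto
  moreover have "e ` {..<j} \<subseteq> e ` {..<k}" using j(1) by auto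
  ultimately show thesis using that c(2) by blast
qed

lemma
  assumes "is_path conn E P x y"
  shows is_path_finite: "finite P" and is_path_nonempty: "P \<noteq> {}" and is_path_ends_distinct: "x \<noteq> y"
proof -
  obtain m u e where p: "path_seq conn E m u e" "u 0 = x" "u m = y" "P = e ` {..<m}"
    using assms unfolding is_path_iff_path_seq by blast
  then show "finite P" by simp
  show "P \<noteq> {}" using p unfolding path_seq_def by auto
  show "x \<noteq> y" using p unfolding path_seq_def by (auto dest: inj_onD)
qed

lemma is_cycle_finite: "is_cycle conn E C \<Longrightarrow> finite C"
  unfolding is_cycle_iff_cycle_seq by auto

lemma is_cycle_Un_paths:
  assumes P: "is_path conn E P x y" and Q: "is_path conn E Q y x"
    and verts: "verts tail head P \<inter> verts tail head Q \<subseteq> {x, y}" and disj: "P \<inter> Q = {}"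
  shows "is_cycle conn E (P \<union> Q)"
proof -
  obtain m u f where p: "path_seq conn E m u f" "u 0 = x" "u m = y" "P = f ` {..<m}"
    using P unfolding is_path_iff_path_seq by blast
  obtain n w g where q: "path_seq conn E n w g" "w 0 = y" "w n = x" "Q = g ` {..<n}"
    using Q unfolding is_path_iff_path_seq by blast
  have ui: "inj_on u {..m}" and wi: "inj_on w {..n}" and m: "0 < m"
    using p(1) q(1) unfolding path_seq_def by auto
  have "u ` {..<m} \<inter> w ` {..<n} = {}"
  proof (intro equals0I)
    fix z assume "z \<in> u ` {..<m} \<inter> w ` {..<n}"
    then obtain i j where ij: "i < m" "j < n" "z = u i" "z = w j" by auto
    have "u i \<in> verts tail head P" using verts_path_seq[OF p(1)] p(4) ij(1) by simp
    moreover have "w j \<in> verts tail head Q" using verts_path_seq[OF q(1)] q(4) ij(2) by simp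
    ultimately have "z \<in> {x, y}" using ij(3,4) verts by auto
    moreover have "u i \<noteq> y" using ui ij(1) p(3) by (auto dest: inj_onD)
    moreover have "w j \<noteq> x" using wi ij(2) q(3) by (auto dest: inj_onD)
    ultimately show False using ij by auto
  qed
  moreover have "inj_on u {..<m}" by (rule inj_on_subset[OF ui]) auto
  moreover have "inj_on w {..<n}" by (rule inj_on_subset[OF wi]) auto
  ultimately have "inj_on (splice m u w) {..<m + n}" by (intro inj_on_splice)
  moreover have "inj_on (splice m f g) {..<m + n}"
    using p(1,4) q(1,4) disj unfolding path_seq_def by (intro inj_on_splice) auto
  moreover have "walk conn E (m + n) (splice m u w) (splice m f g)"
    using p q unfolding path_seq_def by (intro walk_splice) auto
  moreover have "splice m u w (m + n) = splice m u w 0" using m p(2) q(3) by (simp add: splice_start splice_end)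
  ultimately have "cycle_seq conn E (m + n) (splice m u w) (splice m f g)"
    using m unfolding cycle_seq_def by simp
  moreover have "P \<union> Q = splice m f g ` {..<m + n}" using splice_image[of m f g n] p(4) q(4) by simp
  ultimately show ?thesis unfolding is_cycle_iff_cycle_seq by blast
qed

lemma is_path_single_edge:
  assumes P: "is_path conn E P x y" and g: "g \<in> P" and ends: "tail g \<in> {x, y}" "head g \<in> {x, y}"
  shows "P = {g}"
proof -
  obtain m u f where p: "path_seq conn E m u f" "u 0 = x" "u m = y" "P = f ` {..<m}"
    using P unfolding is_path_iff_path_seq by blast
  obtain i where i: "i < m" "g = f i" using g p by auto
  have c: "conn (f i) (u i) (u (Suc i))" using p i unfolding path_seq_def walk_def by auto
  have ui: "inj_on u {..m}" using p unfolding path_seq_def by auto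
  have "u i \<in> {u 0, u m}" "u (Suc i) \<in> {u 0, u m}" using conn_ends[OF c] ends i p by auto
  moreover have "u i \<noteq> u m" "u (Suc i) \<noteq> u 0" using ui i by (auto dest: inj_onD)
  ultimately have "u i = u 0" "u (Suc i) = u m" by auto
  then have "i = 0" "Suc i = m" using ui i by (auto dest: inj_onD)
  then show ?thesis using p i by auto
qed

section \<open>Cycles in closed walks\<close>

lemma walk_inj_edges:
  assumes w: "walk conn E m u e" and ui: "inj_on u {..m}" shows "inj_on e {..<m}"
proof -
  have False if ab: "a < b" "b < m" "e a = e b" for a b
  proof -
    have "conn (e a) (u a) (u (Suc a))" "conn (e b) (u b) (u (Suc b))"
      using w ab(1,2) unfolding walk_def by auto
    then have "u a = u b \<or> u a = u (Suc b)" using conn_shared_end ab(3) by simp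
    then show False using ui ab by (auto dest: inj_onD)
  qed
  then show ?thesis by (metis inj_onI lessThan_iff nat_neq_iff)
qed

lemma walk_shorten:
  "walk conn E m u e \<Longrightarrow> u 0 \<noteq> u m \<Longrightarrow> \<exists>P. is_path conn E P (u 0) (u m) \<and> P \<subseteq> e ` {..<m}"
proof (induction m arbitrary: u e rule: less_induct)
  case (less m u e)
  show ?case
  proof (cases "inj_on u {..m}")
    case True
    have "0 < m" using less.prems by (cases m) auto
    then have "path_seq conn E m u e" using True less.prems walk_inj_edges unfolding path_seq_def by auto
    then show ?thesis unfolding is_path_iff_path_seq by blast
  next
    case False
    then obtain i j where ij: "i < j" "j \<le> m" "u i = u j"
      unfolding inj_on_def by (metis atMost_iff linorder_neqE_nat)
    note cut = walk_shortcut[OF less.prems(1) ij]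
    have "i + (m - j) < m" using ij by auto
    from less.IH[OF this cut(1)] cut(2,3,4) less.prems(2) show ?thesis by fastforce
  qed
qed

lemma is_cycle_loop: "conn g a a \<Longrightarrow> g \<in> E \<Longrightarrow> is_cycle conn E {g}"
  unfolding is_cycle_iff_cycle_seq cycle_seq_def walk_def
  by (intro exI[of _ 1] exI[of _ "\<lambda>_. a"] exI[of _ "\<lambda>_. g"]) (auto simp: inj_on_def)

lemma is_path_edge: "conn g a b \<Longrightarrow> g \<in> E \<Longrightarrow> a \<noteq> b \<Longrightarrow> is_path conn E {g} a b"
  unfolding is_path_iff_path_seq path_seq_def walk_def
  by (intro exI[of _ 1] exI[of _ "\<lambda>t. if t = 0 then a else b"] exI[of _ "\<lambda>_. g"]) (auto simp: inj_on_def)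

lemma is_cycle_insert_path:
  assumes g: "conn g a b" "g \<in> E" and Q: "is_path conn E Q b a" and "g \<notin> Q"
  shows "is_cycle conn E (insert g Q)"
proof -
  have "a \<noteq> b" using is_path_ends_distinct[OF Q] by simp
  then have "is_path conn E {g} a b" using is_path_edge g by blast
  moreover have "verts tail head {g} \<subseteq> {a, b}" using conn_ends[OF g(1)] unfolding verts_def by auto
  ultimately show ?thesis using is_cycle_Un_paths[OF _ Q] \<open>g \<notin> Q\<close> by fastforce
qed

lemma walk_close_cycle:
  assumes g: "conn g a b" "g \<in> E" and w: "walk conn E n w h" "w 0 = b" "w n = a" and "g \<notin> h ` {..<n}"
  shows "\<exists>C. is_cycle conn E C \<and> g \<in> C \<and> C \<subseteq> insert g (h ` {..<n})"
proof (cases "a = b")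
  case True then show ?thesis using is_cycle_loop g by blast
next
  case False
  then obtain Q where "is_path conn E Q b a" "Q \<subseteq> h ` {..<n}" using walk_shorten[OF w(1)] w by auto
  then show ?thesis using is_cycle_insert_path[OF g] \<open>g \<notin> h ` {..<n}\<close> by blast
qed

text \<open>Going once around a closed walk, starting right after an edge used only once, gives a walk
  back to that edge which avoids it.\<close>
lemma closed_walk_cycle_through:
  assumes w: "walk conn E m u e" and closed: "u m = u 0" and i: "i < m"
    and once: "\<forall>j<m. e j = e i \<longrightarrow> j = i"
  shows "\<exists>C. is_cycle conn E C \<and> e i \<in> C \<and> C \<subseteq> e ` {..<m}"
proof -
  define n where "n = m - Suc i"
  define W where "W = splice n (\<lambda>t. u (Suc i + t)) u"
  define H where "H = splice n (\<lambda>t. e (Suc i + t)) e"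
  have walk: "walk conn E (n + i) W H"
    unfolding W_def H_def n_def using walk_drop[OF w, of "Suc i"] walk_take[OF w] i closed
    by (intro walk_splice) auto
  have start: "W 0 = u (Suc i)"
    using closed i unfolding W_def n_def by (cases "Suc i = m") (auto simp: splice_start)
  have stop: "W (n + i) = u i" unfolding W_def by (rule splice_end)
  have "e j \<in> e ` {..<m} - {e i}" if "j < m" "j \<noteq> i" for j using once that by auto
  then have "(\<lambda>t. e (Suc i + t)) ` {..<n} \<union> e ` {..<i} \<subseteq> e ` {..<m} - {e i}"
    unfolding n_def using i by auto
  then have H: "H ` {..<n + i} \<subseteq> e ` {..<m} - {e i}" unfolding H_def splice_image .
  then have "e i \<notin> H ` {..<n + i}" by blast
  moreover have "conn (e i) (u i) (u (Suc i))" "e i \<in> E" using w i unfolding walk_def by auto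
  ultimately obtain C where "is_cycle conn E C" "e i \<in> C" "C \<subseteq> insert (e i) (H ` {..<n + i})"
    using walk_close_cycle walk start stop by metis
  moreover have "insert (e i) (H ` {..<n + i}) \<subseteq> e ` {..<m}" using H i by auto
  ultimately show ?thesis by blast
qed

lemma closed_walk_distinct_cycle_seq:
  assumes w: "walk conn E k v e" and closed: "v k = v 0" and vi: "inj_on v {..<k}"
    and k: "0 < k" "k \<noteq> 2"
  shows "cycle_seq conn E k v e"
proof -
  have False if ab: "a < b" "b < k" "e a = e b" for a b
  proof -
    have "conn (e a) (v a) (v (Suc a))" "conn (e b) (v b) (v (Suc b))"
      using w ab(1,2) unfolding walk_def by auto
    then have c: "conn (e a) (v a) (v (Suc a))" "conn (e a) (v b) (v (Suc b))" using ab(3) by simp_all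
    have ne: "v a \<noteq> v b" using vi ab by (auto dest: inj_onD)
    then have va: "v a = v (Suc b)" using conn_shared_end[OF c(1) c(2)] by simp
    have "v b = v (Suc a)" using conn_shared_end[OF c(2) c(1)] ne by auto
    moreover have "Suc a < k" using ab by simp
    ultimately have b: "b = Suc a" using vi ab(2) by (auto dest: inj_onD)
    show False
    proof (cases "Suc b < k")
      case True
      then have "a = Suc b" using va vi ab by (auto dest: inj_onD)
      then show False using ab by simp
    next
      case False
      then have "Suc b = k" using ab(2) by simp
      then have "v a = v 0" using va closed by simp
      then have "a = 0" using vi ab k by (auto dest: inj_onD)
      then show False using b False ab k by simp
    qed
  qed
  then have "inj_on e {..<k}" by (metis inj_onI lessThan_iff nat_neq_iff)
  then show ?thesis using assms unfolding cycle_seq_def by simp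
qed

lemma closed_walk_odd_cycle:
  "walk conn E m u e \<Longrightarrow> u m = u 0 \<Longrightarrow> odd m \<Longrightarrow>
    \<exists>C. is_cycle conn E C \<and> C \<subseteq> e ` {..<m} \<and> odd (card C)"
proof (induction m arbitrary: u e rule: less_induct)
  case (less m u e)
  show ?case
  proof (cases "inj_on u {..<m}")
    case True
    have "0 < m" "m \<noteq> 2" using less.prems(3) by (auto intro: odd_pos)
    then have c: "cycle_seq conn E m u e" using closed_walk_distinct_cycle_seq less.prems True by blast
    then have "card (e ` {..<m}) = m" unfolding cycle_seq_def by (simp add: card_image)
    then show ?thesis using c less.prems(3) unfolding is_cycle_iff_cycle_seq
      by (intro exI[of _ "e ` {..<m}"]) auto
  next
    case False
    then obtain i j where ij: "i < j" "j < m" "u i = u j"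
      unfolding inj_on_def by (metis lessThan_iff linorder_neqE_nat)
    show ?thesis
    proof (cases "odd (j - i)")
      case True
      have "walk conn E (j - i) (\<lambda>t. u (i + t)) (\<lambda>t. e (i + t))"
        using walk_drop[OF walk_take[OF less.prems(1)]] ij by auto
      moreover have "j - i < m" "u (i + (j - i)) = u (i + 0)" using ij by auto
      ultimately obtain C where "is_cycle conn E C" "C \<subseteq> (\<lambda>t. e (i + t)) ` {..<j - i}" "odd (card C)"
        using less.IH True by blast
      moreover have "(\<lambda>t. e (i + t)) ` {..<j - i} \<subseteq> e ` {..<m}" using ij by auto
      ultimately show ?thesis by blast
    next
      case False
      note cut = walk_shortcut[OF less.prems(1) ij(1) less_imp_le[OF ij(2)] ij(3)]
      have "i + (m - j) < m" "odd (i + (m - j))" using ij less.prems(3) False by auto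
      then obtain C where "is_cycle conn E C" "odd (card C)"
          "C \<subseteq> splice i e (\<lambda>t. e (j + t)) ` {..<i + (m - j)}"
        using less.IH cut(1-3) less.prems(2) by metis
      then show ?thesis using cut(4) by blast
    qed
  qed
qed

lemma cycle_through_Un_paths:
  assumes P: "is_path conn E P a b" and Q: "is_path conn E Q b a" and z: "z \<in> P - Q \<or> z \<in> Q - P"
  shows "\<exists>C. is_cycle conn E C \<and> z \<in> C \<and> C \<subseteq> P \<union> Q"
proof -
  obtain m u f where p: "path_seq conn E m u f" "u 0 = a" "u m = b" "P = f ` {..<m}"
    using P unfolding is_path_iff_path_seq by blast
  obtain n w g where q: "path_seq conn E n w g" "w 0 = b" "w n = a" "Q = g ` {..<n}"
    using Q unfolding is_path_iff_path_seq by blast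
  have fi: "inj_on f {..<m}" and gi: "inj_on g {..<n}" using p q unfolding path_seq_def by auto
  note closed = closed_walk_splice_paths[OF p(1-3) q(1-3)]
  have img: "splice m f g ` {..<m + n} = P \<union> Q" using splice_image[of m f g n] p(4) q(4) by simp
  have "\<exists>i<m + n. splice m f g i = z \<and> (\<forall>j<m + n. splice m f g j = z \<longrightarrow> j = i)"
    using z
  proof
    assume z: "z \<in> P - Q"
    then obtain i where i: "i < m" "z = f i" using p by auto
    have "j = i" if "j < m + n" "splice m f g j = z" for j
    proof (cases "j < m")
      case True then show ?thesis using that i fi by (auto simp: splice_def dest: inj_onD)
    next
      case False
      then have "g (j - m) \<in> Q" using q(4) that(1) by auto
      then show ?thesis using that(2) z False by (auto simp: splice_def)
    qed
    then show ?thesis using i by (intro exI[of _ i]) (auto simp: splice_def)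
  next
    assume z: "z \<in> Q - P"
    then obtain i where i: "i < n" "z = g i" using q by auto
    have "j = m + i" if "j < m + n" "splice m f g j = z" for j
    proof (cases "j < m")
      case True
      then have "f j \<in> P" using p(4) by auto
      then show ?thesis using that(2) z True by (auto simp: splice_def)
    next
      case False
      then have "g (j - m) = g i" using that i by (auto simp: splice_def)
      then show ?thesis using gi False that(1) i by (auto dest: inj_onD)
    qed
    then show ?thesis using i by (intro exI[of _ "m + i"]) (auto simp: splice_def)
  qed
  then obtain i where "i < m + n" "splice m f g i = z" "\<forall>j<m + n. splice m f g j = splice m f g i \<longrightarrow> j = i"
    by auto
  from closed_walk_cycle_through[OF closed this(1,3)] this(2) img show ?thesis by auto
qed

lemma odd_cycle_Un_paths:
  assumes P: "is_path conn E P a b" and Q: "is_path conn E Q b a" and odd: "odd (card P + card Q)"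
  shows "\<exists>C. is_cycle conn E C \<and> odd (card C) \<and> C \<subseteq> P \<union> Q"
proof -
  obtain m u f where p: "path_seq conn E m u f" "u 0 = a" "u m = b" "P = f ` {..<m}"
    using P unfolding is_path_iff_path_seq by blast
  obtain n w g where q: "path_seq conn E n w g" "w 0 = b" "w n = a" "Q = g ` {..<n}"
    using Q unfolding is_path_iff_path_seq by blast
  have "card P = m" "card Q = n" using p q unfolding path_seq_def by (auto simp: card_image)
  then have "odd (m + n)" using odd by simp
  from closed_walk_odd_cycle[OF closed_walk_splice_paths[OF p(1-3) q(1-3)] this]
  show ?thesis using splice_image[of m f g n] p(4) q(4) by auto
qed

section \<open>The complement of a path in a cycle\<close>

lemma is_path_ends_in_verts:
  assumes "is_path conn E P x y" shows "x \<in> verts tail head P" "y \<in> verts tail head P"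
proof -
  obtain m u f where "path_seq conn E m u f" "u 0 = x" "u m = y" "P = f ` {..<m}"
    using assms unfolding is_path_iff_path_seq by blast
  then show "x \<in> verts tail head P" "y \<in> verts tail head P" using verts_path_seq by auto
qed

lemma cycle_seq_edge_at_start:
  assumes c: "cycle_seq conn E k v e" and i: "i < k" and "conn (e i) (v 0) b"
  shows "i = 0 \<or> Suc i = k"
proof -
  have "conn (e i) (v i) (v (Suc i))" using c i unfolding cycle_seq_def walk_def by auto
  then have "v 0 = v i \<or> v 0 = v (Suc i)" using conn_shared_end assms(3) by blast
  moreover have "inj_on v {..<k}" using c unfolding cycle_seq_def by simp
  ultimately show ?thesis using i by (cases "Suc i < k") (auto dest: inj_onD)
qed

text \<open>A path inside a cycle leaves its start along one of the two cycle edges there; if the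
  second one can be turned into the first by reorienting the cycle, the rest of the cycle is a
  path back.\<close>
lemma is_path_complement:
  assumes C: "is_cycle conn E C" and P: "is_path conn E P x y" and sub: "P \<subseteq> C"
    and reorient: "\<And>k v e b. cycle_seq conn E k v e \<Longrightarrow> 0 < k - 1 \<Longrightarrow> conn (e (k - 1)) (v 0) b \<Longrightarrow>
      \<exists>v' e'. cycle_seq conn E k v' e' \<and> e' ` {..<k} = e ` {..<k} \<and> v' 0 = v 0 \<and> e' 0 = e (k - 1)"
  shows "is_path conn E (C - P) y x"
proof -
  have "x \<in> verts tail head C"
    using is_path_ends_in_verts(1)[OF P] sub unfolding verts_def by auto
  then obtain k v e where c: "cycle_seq conn E k v e" "C = e ` {..<k}" "v 0 = x"
    using is_cycle_cycle_seq_from[OF C] by blast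
  obtain m u f where p: "path_seq conn E m u f" "u 0 = x" "u m = y" "P = f ` {..<m}"
    using P unfolding is_path_iff_path_seq by blast
  have "0 < m" using p unfolding path_seq_def by simp
  then obtain i where i: "i < k" "f 0 = e i" using sub c(2) p(4) by auto
  have first: "conn (e i) (v 0) (u 1)"
    using p(1) \<open>0 < m\<close> i(2) p(2) c(3) unfolding path_seq_def walk_def by auto
  then have "i = 0 \<or> Suc i = k" by (rule cycle_seq_edge_at_start[OF c(1) i(1)])
  then have "i = 0 \<or> (0 < k - 1 \<and> i = k - 1)" by auto
  then obtain v' e' where c': "cycle_seq conn E k v' e'" "C = e' ` {..<k}" "v' 0 = x" "f 0 = e' 0"
    using reorient[OF c(1)] first c i(2) by metis
  show ?thesis
    using is_path_cycle_seq_complement[OF c'(1) p(1) _ _ c'(4)] c'(2,3) p sub by auto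
qed

end

lemma incidence_dir: "incidence (conn_dir tail head) tail head"
  by unfold_locales (auto simp: conn_dir_def)

lemma incidence_und: "incidence (conn_und tail head) tail head"
  by unfold_locales (auto simp: conn_und_def)

lemma conn_und_sym: "conn_und tail head g a b \<Longrightarrow> conn_und tail head g b a"
  unfolding conn_und_def by auto

lemma is_path_complement_dir:
  assumes "is_cycle (conn_dir t h) E C" "is_path (conn_dir t h) E P x y" "P \<subseteq> C"
  shows "is_path (conn_dir t h) E (C - P) y x"
proof (rule incidence.is_path_complement[OF incidence_dir assms])
  fix k v e b assume c: "cycle_seq (conn_dir t h) E k v e" and k: "0 < k - 1"
    and from_start: "conn_dir t h (e (k - 1)) (v 0) b"
  have "k - 1 < k" "Suc (k - 1) = k" using k by auto
  then have "conn_dir t h (e (k - 1)) (v (k - 1)) (v 0)"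
    using c unfolding cycle_seq_def walk_def by metis
  then have "v (k - 1) = v 0" using from_start unfolding conn_dir_def by simp
  then show "\<exists>v' e'. cycle_seq (conn_dir t h) E k v' e' \<and> e' ` {..<k} = e ` {..<k} \<and>
      v' 0 = v 0 \<and> e' 0 = e (k - 1)"
    using c k unfolding cycle_seq_def by (auto dest: inj_onD)
qed

lemma is_path_complement_und:
  assumes "is_cycle (conn_und t h) E C" "is_path (conn_und t h) E P x y" "P \<subseteq> C"
  shows "is_path (conn_und t h) E (C - P) y x"
proof (rule incidence.is_path_complement[OF incidence_und assms])
  fix k v e assume c: "cycle_seq (conn_und t h) E k v e"
  then have "v k = v 0" unfolding cycle_seq_def by simp
  then show "\<exists>v' e'. cycle_seq (conn_und t h) E k v' e' \<and> e' ` {..<k} = e ` {..<k} \<and>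
      v' 0 = v 0 \<and> e' 0 = e (k - 1)"
    using cycle_seq_reverse[OF conn_und_sym c]
    by (intro exI[of _ "\<lambda>i. v (k - i)"] exI[of _ "\<lambda>i. e (k - Suc i)"]) simp
qed

section \<open>Crossing configurations\<close>

definition uncrosses :: "'e set set \<Rightarrow> 'e set \<Rightarrow> 'e set \<Rightarrow> 'e set \<Rightarrow> 'e set \<Rightarrow> bool" where
  "uncrosses \<C> C1 P1 C2 P2 \<longleftrightarrow> P1 \<union> P2 \<in> \<C> \<and> (\<exists>C\<in>\<C>. C \<subseteq> (C1 - P1) \<union> (C2 - P2))"

locale crossing = incidence conn tail head for conn :: "('e, 'v) adjacency" and tail head +
  fixes E C1 C2 P2 :: "'e set" and x y :: 'v and A B :: "'e set"
  assumes C1: "is_cycle conn E C1" and C2: "is_cycle conn E C2"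
    and P2: "is_path conn E P2 x y" and P2_sub: "P2 \<subseteq> C2" and P2_C1: "P2 \<inter> C1 = {}"
    and verts_P2_C1: "verts tail head P2 \<inter> verts tail head C1 \<subseteq> {x, y}"
    and A: "is_path conn E A x y" and B: "is_path conn E B y x"
    and AB_disj: "A \<inter> B = {}" and AB_C1: "A \<union> B = C1"
    and R: "is_path conn E (C2 - P2) y x"

context incidence
begin

lemma uncrossable_if_crossings_uncross:
  assumes complement: "\<And>C P x y. is_cycle conn E C \<Longrightarrow> is_path conn E P x y \<Longrightarrow> P \<subseteq> C \<Longrightarrow>
      is_path conn E (C - P) y x"
    and cycles: "\<And>C. C \<in> \<C> \<Longrightarrow> is_cycle conn E C"
    and uncross: "\<And>C1 C2 P2 x y A B. crossing conn tail head E C1 C2 P2 x y A B \<Longrightarrow> C1 \<in> \<C> \<Longrightarrow>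
      C2 \<in> \<C> \<Longrightarrow> uncrosses \<C> C1 A C2 P2 \<or> uncrosses \<C> C1 B C2 P2"
  shows "uncrossable conn tail head E \<C>"
  unfolding uncrossable_def
proof (intro ballI allI impI)
  fix C1 C2 P2 x y
  assume C1: "C1 \<in> \<C>" and C2: "C2 \<in> \<C>"
    and "is_path conn E P2 x y \<and> P2 \<subseteq> C2 \<and> verts tail head P2 \<inter> verts tail head C1 = {x, y}"
  then have P2: "is_path conn E P2 x y" and sub: "P2 \<subseteq> C2"
    and verts: "verts tail head P2 \<inter> verts tail head C1 = {x, y}" by auto
  have "x \<in> verts tail head C1" "y \<in> verts tail head C1" "x \<noteq> y"
    using verts is_path_ends_distinct[OF P2] by auto
  then obtain A B where AB: "is_path conn E A x y" "is_path conn E B y x" "A \<inter> B = {}" "A \<union> B = C1"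
    using is_cycle_split[OF cycles[OF C1]] by blast
  have R: "is_path conn E (C2 - P2) y x" using complement[OF cycles[OF C2] P2 sub] .
  show "\<exists>P1. (is_path conn E P1 x y \<or> is_path conn E P1 y x) \<and> P1 \<subseteq> C1 \<and> P1 \<inter> P2 = {} \<and>
      P1 \<union> P2 \<in> \<C> \<and> (\<exists>C\<in>\<C>. C \<subseteq> (C1 - P1) \<union> (C2 - P2))"
  proof (cases "P2 \<inter> C1 = {}")
    case True
    then have "crossing conn tail head E C1 C2 P2 x y A B"
      using cycles[OF C1] cycles[OF C2] P2 sub verts AB R
      by (intro crossing.intro incidence_axioms crossing_axioms.intro) auto
    then have "uncrosses \<C> C1 A C2 P2 \<or> uncrosses \<C> C1 B C2 P2" using uncross C1 C2 by blast
    then show ?thesis using AB True unfolding uncrosses_def by blast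
  next
    case False
    text \<open>Then P2 is a single edge of C1 joining x and y, hence equal to A or to B; the other
      one is the required P1, as P1 + P2 = C1 and C2 itself lies in the remainder.\<close>
    then obtain g where g: "g \<in> P2" "g \<in> C1" by auto
    then have "tail g \<in> {x, y}" "head g \<in> {x, y}" using verts unfolding verts_def by auto
    then have "P2 = {g}" "g \<in> A \<Longrightarrow> A = {g}" "g \<in> B \<Longrightarrow> B = {g}"
      using is_path_single_edge[OF P2 g(1)] is_path_single_edge[OF AB(1)] is_path_single_edge[OF AB(2)]
      by auto
    then consider "A = P2" | "B = P2" using g AB(4) by blast
    then show ?thesis
    proof cases
      case 1
      then have "B \<union> P2 = C1" "B \<inter> P2 = {}" "C2 \<subseteq> (C1 - B) \<union> (C2 - P2)" using AB(3,4) by auto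
      then show ?thesis using AB(2,4) C1 C2 by (intro exI[of _ B]) auto
    next
      case 2
      then have "A \<union> P2 = C1" "A \<inter> P2 = {}" "C2 \<subseteq> (C1 - A) \<union> (C2 - P2)" using AB(3,4) by auto
      then show ?thesis using AB(1,4) C1 C2 by (intro exI[of _ A]) auto
    qed
  qed
qed

end

lemma cycles_girth_if_card_sum_le:
  assumes "is_cycle conn E X" "is_cycle conn E Y" "C1 \<in> cycles_girth conn E" "C2 \<in> cycles_girth conn E"
    and "card X + card Y \<le> card C1 + card C2"
  shows "X \<in> cycles_girth conn E" "Y \<in> cycles_girth conn E"
proof -
  have min: "\<forall>C. is_cycle conn E C \<longrightarrow> card C1 \<le> card C" and "card C1 = card C2"
    using assms(3,4) unfolding cycles_girth_def by (auto intro: le_antisym)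
  then have "card X \<le> card C1" "card Y \<le> card C1" using assms(1,2,5) by fastforce+
  then show "X \<in> cycles_girth conn E" "Y \<in> cycles_girth conn E"
    using assms(1,2) min unfolding cycles_girth_def by (auto intro: order.trans)
qed

context crossing
begin

lemma C1_minus_B: "C1 - B = A"
  using AB_disj AB_C1 by auto

lemma is_cycle_B_P2: "is_cycle conn E (B \<union> P2)"
proof -
  have "verts tail head P2 \<inter> verts tail head B \<subseteq> {x, y}"
    using verts_P2_C1 AB_C1 unfolding verts_def by auto
  moreover have "P2 \<inter> B = {}" using P2_C1 AB_C1 by auto
  ultimately show ?thesis using is_cycle_Un_paths[OF P2 B] by (simp add: Un_commute)
qed

lemma card_C1: "card C1 = card A + card B"
  using is_path_finite[OF A] is_path_finite[OF B] AB_disj AB_C1 card_Un_disjoint by blast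

lemma card_C2: "card C2 = card P2 + card (C2 - P2)"
proof -
  have "finite C2" using is_cycle_finite[OF C2] .
  then show ?thesis using P2_sub card_mono[of C2 P2] by (simp add: card_Diff_subset finite_subset)
qed

lemma card_B_P2: "card (B \<union> P2) = card B + card P2"
  using is_path_finite B P2 P2_C1 AB_C1 by (subst card_Un_disjoint) auto

lemma uncrosses_all:
  assumes "z \<in> A - (C2 - P2) \<or> z \<in> (C2 - P2) - A"
  shows "uncrosses (cycles_all conn E) C1 B C2 P2"
  using cycle_through_Un_paths[OF A R assms] is_cycle_B_P2
  unfolding uncrosses_def cycles_all_def C1_minus_B by auto

lemma uncrosses_girth:
  assumes "z \<in> A - (C2 - P2) \<or> z \<in> (C2 - P2) - A"
    and girth: "C1 \<in> cycles_girth conn E" "C2 \<in> cycles_girth conn E"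
  shows "uncrosses (cycles_girth conn E) C1 B C2 P2"
proof -
  obtain C where C: "is_cycle conn E C" "C \<subseteq> A \<union> (C2 - P2)"
    using cycle_through_Un_paths[OF A R assms(1)] by blast
  have "finite A" "finite (C2 - P2)" using is_path_finite A R by auto
  then have "card C \<le> card A + card (C2 - P2)"
    using C(2) card_mono card_Un_le by (metis finite_UnI order_trans)
  then have "card (B \<union> P2) + card C \<le> card C1 + card C2" using card_C1 card_C2 card_B_P2 by simp
  from cycles_girth_if_card_sum_le[OF is_cycle_B_P2 C(1) girth this]
  show ?thesis using C(2) unfolding uncrosses_def C1_minus_B by auto
qed

lemma uncrosses_odd:
  assumes odd: "C1 \<in> cycles_odd conn E" "C2 \<in> cycles_odd conn E" and "odd (card B + card P2)"
  shows "uncrosses (cycles_odd conn E) C1 B C2 P2"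
proof -
  have "odd (card C1)" "odd (card C2)" using odd unfolding cycles_odd_def by auto
  then have "odd (card A + card (C2 - P2))"
    using card_C1 card_C2 \<open>odd (card B + card P2)\<close> by presburger
  then obtain C where "is_cycle conn E C" "odd (card C)" "C \<subseteq> A \<union> (C2 - P2)"
    using odd_cycle_Un_paths[OF A R] by blast
  then show ?thesis using is_cycle_B_P2 card_B_P2 \<open>odd (card B + card P2)\<close>
    unfolding uncrosses_def cycles_odd_def C1_minus_B by auto
qed

lemma uncrosses_D_eq1:
  assumes D1: "C1 \<inter> D = {d1}" and D2: "C2 \<inter> D = {d2}" and parity: "d1 \<in> A \<longleftrightarrow> d2 \<in> P2"
  shows "uncrosses (cycles_D_eq1 conn E D) C1 B C2 P2"
proof -
  obtain d z where d: "(B \<union> P2) \<inter> D = {d}" and z: "(A \<union> (C2 - P2)) \<inter> D = {z}"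
    and zAR: "z \<in> A - (C2 - P2) \<or> z \<in> (C2 - P2) - A"
  proof -
    have "d1 \<in> A \<union> B" "d2 \<in> C2" "d1 \<in> D" "d2 \<in> D" using D1 D2 AB_C1 by auto
    moreover have "z = d1" if "z \<in> A \<union> B" "z \<in> D" for z using D1 AB_C1 that by auto
    moreover have "z = d2" if "z \<in> C2" "z \<in> D" for z using D2 that by auto
    ultimately show thesis
      using that[of d2 d1] that[of d1 d2] parity AB_disj P2_sub by (cases "d1 \<in> A") blast+
  qed
  obtain C where C: "is_cycle conn E C" "z \<in> C" "C \<subseteq> A \<union> (C2 - P2)"
    using cycle_through_Un_paths[OF A R zAR] by blast
  then have "C \<inter> D = {z}" using z by auto
  then show ?thesis using C(1,3) d is_cycle_B_P2
    unfolding uncrosses_def cycles_D_eq1_def C1_minus_B by auto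
qed

lemma uncrosses_D_ge1:
  assumes "(B \<union> P2) \<inter> D \<noteq> {}" "z \<in> D" "z \<in> A - (C2 - P2) \<or> z \<in> (C2 - P2) - A"
  shows "uncrosses (cycles_D_ge1 conn E D) C1 B C2 P2"
  using cycle_through_Un_paths[OF A R assms(3)] is_cycle_B_P2 assms(1,2)
  unfolding uncrosses_def cycles_D_ge1_def C1_minus_B by blast

end

locale sym_crossing = crossing +
  assumes conn_sym: "conn g a b \<Longrightarrow> conn g b a"
begin

text \<open>Reversing P2 and C2 - P2 exchanges the roles of A and B, so for each family it suffices to
  give a criterion for choosing P1 = B.\<close>
lemma swap: "sym_crossing conn tail head E C1 C2 P2 y x B A"
proof -
  have "crossing conn tail head E C1 C2 P2 y x B A"
    using C1 C2 is_path_reverse[OF conn_sym P2] P2_sub P2_C1 verts_P2_C1 A B AB_disj AB_C1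
      is_path_reverse[OF conn_sym R] is_path_reverse[OF conn_sym A] is_path_reverse[OF conn_sym B]
    by unfold_locales auto
  then show ?thesis by (intro sym_crossing.intro sym_crossing_axioms.intro) (auto intro: conn_sym)
qed

lemma uncrosses_all_either:
  "uncrosses (cycles_all conn E) C1 A C2 P2 \<or> uncrosses (cycles_all conn E) C1 B C2 P2"
proof -
  interpret swapped: sym_crossing conn tail head E C1 C2 P2 y x B A by (rule swap)
  have "A \<noteq> B" using AB_disj is_path_nonempty[OF A] by auto
  then obtain z where "z \<in> A - (C2 - P2) \<or> z \<in> (C2 - P2) - A \<or> z \<in> B - (C2 - P2) \<or> z \<in> (C2 - P2) - B"
    by blast
  then show ?thesis using uncrosses_all swapped.uncrosses_all by blast
qed

lemma uncrosses_girth_either: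
  assumes "C1 \<in> cycles_girth conn E" "C2 \<in> cycles_girth conn E"
  shows "uncrosses (cycles_girth conn E) C1 A C2 P2 \<or> uncrosses (cycles_girth conn E) C1 B C2 P2"
proof -
  interpret swapped: sym_crossing conn tail head E C1 C2 P2 y x B A by (rule swap)
  have "A \<noteq> B" using AB_disj is_path_nonempty[OF A] by auto
  then obtain z where "z \<in> A - (C2 - P2) \<or> z \<in> (C2 - P2) - A \<or> z \<in> B - (C2 - P2) \<or> z \<in> (C2 - P2) - B"
    by blast
  then show ?thesis using uncrosses_girth[OF _ assms] swapped.uncrosses_girth[OF _ assms] by blast
qed

lemma uncrosses_odd_either:
  assumes "C1 \<in> cycles_odd conn E" "C2 \<in> cycles_odd conn E"
  shows "uncrosses (cycles_odd conn E) C1 A C2 P2 \<or> uncrosses (cycles_odd conn E) C1 B C2 P2"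
proof -
  interpret swapped: sym_crossing conn tail head E C1 C2 P2 y x B A by (rule swap)
  have "odd (card C1)" using assms(1) unfolding cycles_odd_def by simp
  then have "odd (card B + card P2) \<or> odd (card A + card P2)" using card_C1 by presburger
  then show ?thesis using uncrosses_odd[OF assms] swapped.uncrosses_odd[OF assms] by blast
qed

lemma uncrosses_D_eq1_either:
  assumes "C1 \<in> cycles_D_eq1 conn E D" "C2 \<in> cycles_D_eq1 conn E D"
  shows "uncrosses (cycles_D_eq1 conn E D) C1 A C2 P2 \<or> uncrosses (cycles_D_eq1 conn E D) C1 B C2 P2"
proof -
  interpret swapped: sym_crossing conn tail head E C1 C2 P2 y x B A by (rule swap)
  obtain d1 d2 where "C1 \<inter> D = {d1}" "C2 \<inter> D = {d2}"
    using assms unfolding cycles_D_eq1_def by (auto simp: card_1_singleton_iff)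
  moreover have "(d1 \<in> A \<longleftrightarrow> d2 \<in> P2) \<or> (d1 \<in> B \<longleftrightarrow> d2 \<in> P2)"
    using calculation AB_disj AB_C1 by auto
  ultimately show ?thesis using uncrosses_D_eq1 swapped.uncrosses_D_eq1 by blast
qed

lemma uncrosses_D_ge1_either:
  assumes "C1 \<in> cycles_D_ge1 conn E D" "C2 \<in> cycles_D_ge1 conn E D"
  shows "uncrosses (cycles_D_ge1 conn E D) C1 A C2 P2 \<or> uncrosses (cycles_D_ge1 conn E D) C1 B C2 P2"
proof -
  interpret swapped: sym_crossing conn tail head E C1 C2 P2 y x B A by (rule swap)
  obtain g where g: "g \<in> C1" "g \<in> D" using assms(1) unfolding cycles_D_ge1_def by auto
  show ?thesis
  proof (cases "(C2 - P2) \<inter> D = {}")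
    case True
    then obtain p where "p \<in> P2" "p \<in> D" using assms(2) unfolding cycles_D_ge1_def by auto
    then have "(A \<union> P2) \<inter> D \<noteq> {}" "(B \<union> P2) \<inter> D \<noteq> {}" by auto
    moreover have "g \<in> A - (C2 - P2) \<or> g \<in> B - (C2 - P2)" using g True AB_C1 by auto
    ultimately show ?thesis using uncrosses_D_ge1 swapped.uncrosses_D_ge1 g(2) by blast
  next
    case False
    then obtain f where f: "f \<in> C2 - P2" "f \<in> D" by auto
    show ?thesis
    proof (cases "f \<in> B \<or> (f \<notin> A \<and> g \<in> B)")
      case True
      then have "(B \<union> P2) \<inter> D \<noteq> {}" "f \<in> (C2 - P2) - A" using f g AB_disj by auto
      then show ?thesis using uncrosses_D_ge1 f(2) by blast
    next
      case False
      then have "(A \<union> P2) \<inter> D \<noteq> {}" "f \<in> (C2 - P2) - B" using f g AB_C1 by auto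
      then show ?thesis using swapped.uncrosses_D_ge1 f(2) by blast
    qed
  qed
qed

end

section \<open>The seven families\<close>

lemma is_path_dir_tails:
  assumes "is_path (conn_dir t h) E P a b"
  shows "\<exists>g\<in>P. t g = a" and "\<forall>g\<in>P. t g \<noteq> b"
proof -
  obtain m u f where p: "path_seq (conn_dir t h) E m u f" "u 0 = a" "u m = b" "P = f ` {..<m}"
    using assms unfolding is_path_iff_path_seq by blast
  then have tails: "t (f i) = u i" if "i < m" for i
    using that unfolding path_seq_def walk_def conn_dir_def by auto
  show "\<exists>g\<in>P. t g = a" using p tails[of 0] unfolding path_seq_def by auto
  show "\<forall>g\<in>P. t g \<noteq> b" using p tails unfolding path_seq_def by (auto dest: inj_onD)
qed

lemma crossing_dir_uncrosses:
  assumes "crossing (conn_dir t h) t h E C1 C2 P2 x y A B"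
  shows "uncrosses (cycles_all (conn_dir t h) E) C1 B C2 P2"
    and "C1 \<in> cycles_girth (conn_dir t h) E \<Longrightarrow> C2 \<in> cycles_girth (conn_dir t h) E \<Longrightarrow>
      uncrosses (cycles_girth (conn_dir t h) E) C1 B C2 P2"
proof -
  text \<open>A leaves x, while no edge of the path C2 - P2 leaves its end x.\<close>
  obtain z where "z \<in> A - (C2 - P2)"
    using is_path_dir_tails[OF crossing.A[OF assms]] is_path_dir_tails[OF crossing.R[OF assms]] by blast
  then show "uncrosses (cycles_all (conn_dir t h) E) C1 B C2 P2"
    and "C1 \<in> cycles_girth (conn_dir t h) E \<Longrightarrow> C2 \<in> cycles_girth (conn_dir t h) E \<Longrightarrow>
      uncrosses (cycles_girth (conn_dir t h) E) C1 B C2 P2"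
    using crossing.uncrosses_all[OF assms] crossing.uncrosses_girth[OF assms] by blast+
qed

lemma sym_crossing_und:
  "crossing (conn_und t h) t h E C1 C2 P2 x y A B \<Longrightarrow> sym_crossing (conn_und t h) t h E C1 C2 P2 x y A B"
  by (intro sym_crossing.intro sym_crossing_axioms.intro) (auto simp: conn_und_def)

lemma uncrossable_dir_cycles_all: "uncrossable (conn_dir t h) t h E (cycles_all (conn_dir t h) E)"
  by (rule incidence.uncrossable_if_crossings_uncross[OF incidence_dir])
    (fact is_path_complement_dir, simp add: cycles_all_def, rule disjI2, rule crossing_dir_uncrosses(1))

lemma uncrossable_dir_cycles_girth: "uncrossable (conn_dir t h) t h E (cycles_girth (conn_dir t h) E)"
  by (rule incidence.uncrossable_if_crossings_uncross[OF incidence_dir])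
    (fact is_path_complement_dir, simp add: cycles_girth_def, rule disjI2, rule crossing_dir_uncrosses(2))

lemma uncrossable_und_cycles_all: "uncrossable (conn_und t h) t h E (cycles_all (conn_und t h) E)"
  by (rule incidence.uncrossable_if_crossings_uncross[OF incidence_und])
    (fact is_path_complement_und, simp add: cycles_all_def, rule sym_crossing.uncrosses_all_either[OF sym_crossing_und])

lemma uncrossable_und_cycles_girth: "uncrossable (conn_und t h) t h E (cycles_girth (conn_und t h) E)"
  by (rule incidence.uncrossable_if_crossings_uncross[OF incidence_und])
    (fact is_path_complement_und, simp add: cycles_girth_def, rule sym_crossing.uncrosses_girth_either[OF sym_crossing_und])

lemma uncrossable_und_cycles_odd: "uncrossable (conn_und t h) t h E (cycles_odd (conn_und t h) E)"
  by (rule incidence.uncrossable_if_crossings_uncross[OF incidence_und])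
    (fact is_path_complement_und, simp add: cycles_odd_def, rule sym_crossing.uncrosses_odd_either[OF sym_crossing_und])

lemma uncrossable_und_cycles_D_eq1: "uncrossable (conn_und t h) t h E (cycles_D_eq1 (conn_und t h) E D)"
  by (rule incidence.uncrossable_if_crossings_uncross[OF incidence_und])
    (fact is_path_complement_und, simp add: cycles_D_eq1_def, rule sym_crossing.uncrosses_D_eq1_either[OF sym_crossing_und])

lemma uncrossable_und_cycles_D_ge1: "uncrossable (conn_und t h) t h E (cycles_D_ge1 (conn_und t h) E D)"
  by (rule incidence.uncrossable_if_crossings_uncross[OF incidence_und])
    (fact is_path_complement_und, simp add: cycles_D_ge1_def, rule sym_crossing.uncrosses_D_ge1_either[OF sym_crossing_und])

theorem proposition2p2:
  fixes V :: "'v set" and E :: "'e set" and tail head :: "'e \<Rightarrow> 'v" and D :: "'e set"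
  assumes "finite V" and "finite E"
    and "\<forall>e\<in>E. tail e \<in> V \<and> head e \<in> V"
    and "D \<subseteq> E"
  shows "uncrossable (conn_dir tail head) tail head E (cycles_all (conn_dir tail head) E) \<and>
      uncrossable (conn_dir tail head) tail head E (cycles_girth (conn_dir tail head) E) \<and>
      uncrossable (conn_und tail head) tail head E (cycles_all (conn_und tail head) E) \<and>
      uncrossable (conn_und tail head) tail head E (cycles_girth (conn_und tail head) E) \<and>
      uncrossable (conn_und tail head) tail head E (cycles_odd (conn_und tail head) E) \<and>
      uncrossable (conn_und tail head) tail head E (cycles_D_eq1 (conn_und tail head) E D) \<and>
      uncrossable (conn_und tail head) tail head E (cycles_D_ge1 (conn_und tail head) E D)"
  by (intro conjI uncrossable_dir_cycles_all uncrossable_dir_cycles_girth uncrossable_und_cycles_all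
      uncrossable_und_cycles_girth uncrossable_und_cycles_odd uncrossable_und_cycles_D_eq1
      uncrossable_und_cycles_D_ge1)

end
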